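(* For all integers $k\ge1$, $\theta\ge1$ and $\epsilon>0$, there exists a mechanism that answers the workload $\mathbf{R}_k$ of all one-dimensional range queries over $[k]$ with $O(\log^3\theta/\epsilon^2)$ error per query under $(\epsilon,G^\theta_k)$-Blowfish privacy.
   Context: Databases are histogram vectors $\mathbf{x}\in\mathbb{R}^k$ over $[k]=\{1,\dots,k\}$. $\mathbf{R}_k$ consists of the queries $\mathbf{q}(l,r)\mathbf{x}=\sum_{l\le i\le r}\mathbf{x}_i$ for $1\le l\le r\le k$. The policy graph $G^\theta_k$ has vertex set $[k]$ (no $\bot$) and an edge between distinct $u,v$ iff $|u-v|\le\theta$. Two databases are neighbors under $G^\theta_k$ iff they differ in the value of exactly one record, $u$ in one and $v$ in the other, with $(u,v)$ an edge. A mechanism $\mathcal{M}$ is $(\epsilon,G)$-Blowfish private if $\Pr[\mathcal{M}(\mathbf{x})\in S]\le e^\epsilon\Pr[\mathcal{M}(\mathbf{x}')\in S]$ for all output sets $S$ and all neighbors. Error per query is the data-independent total mean squared error $\max_{\mathbf{x}}\sum_{\mathbf{q}}\mathbb{E}[(\mathbf{q}\mathbf{x}-\mathcal{M}(\mathbf{q},\mathbf{x}))^2]$ divided by the number of queries. *)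

theory Defs
  imports "HOL-Probability.Probability"
begin

text \<open>Databases over [k]: histogram vectors, represented as functions nat => real
  that vanish outside {1..k}.\<close>
definition databases :: "nat \<Rightarrow> (nat \<Rightarrow> real) set" where
  "databases k = {x. \<forall>i. i \<notin> {1..k} \<longrightarrow> x i = 0}"

definition range_queries :: "nat \<Rightarrow> (nat \<times> nat) set" where
  "range_queries k = {(l, r). 1 \<le> l \<and> l \<le> r \<and> r \<le> k}"

definition range_query :: "nat \<times> nat \<Rightarrow> (nat \<Rightarrow> real) \<Rightarrow> real" where
  "range_query q x = (\<Sum>i\<in>{fst q..snd q}. x i)"

text \<open>Neighbors under the policy graph G^theta_k (vertex set [k], edge between
  distinct u, v iff |u - v| <= theta): one record changes its value from u to v.\<close>
definition blowfish_neighbors :: "nat \<Rightarrow> nat \<Rightarrow> (nat \<Rightarrow> real) \<Rightarrow> (nat \<Rightarrow> real) \<Rightarrow> bool" where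
  "blowfish_neighbors \<theta> k x x' \<longleftrightarrow> x \<in> databases k \<and>
     (\<exists>u v. u \<in> {1..k} \<and> v \<in> {1..k} \<and> u \<noteq> v \<and>
        \<bar>int u - int v\<bar> \<le> int \<theta> \<and> x' = x(u := x u - 1, v := x v + 1))"

definition output_space :: "nat \<Rightarrow> (nat \<times> nat \<Rightarrow> real) measure" where
  "output_space k = PiM (range_queries k) (\<lambda>_. borel)"

definition blowfish_private ::
  "real \<Rightarrow> nat \<Rightarrow> nat \<Rightarrow> ((nat \<Rightarrow> real) \<Rightarrow> (nat \<times> nat \<Rightarrow> real) measure) \<Rightarrow> bool" where
  "blowfish_private \<epsilon> \<theta> k M \<longleftrightarrow>
     (\<forall>x\<in>databases k. prob_space (M x) \<and> sets (M x) = sets (output_space k)) \<and>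
     (\<forall>x x' S. blowfish_neighbors \<theta> k x x' \<longrightarrow> S \<in> sets (output_space k) \<longrightarrow>
        measure (M x) S \<le> exp \<epsilon> * measure (M x') S)"

definition error_per_query ::
  "nat \<Rightarrow> ((nat \<Rightarrow> real) \<Rightarrow> (nat \<times> nat \<Rightarrow> real) measure) \<Rightarrow> ennreal" where
  "error_per_query k M =
     (SUP x\<in>databases k. \<Sum>q\<in>range_queries k.
        \<integral>\<^sup>+ y. ennreal ((range_query q x - y q)\<^sup>2) \<partial>(M x))
     / of_nat (card (range_queries k))"

end

theory Submission
  imports Defs "HOL-Library.Discrete_Functions" "HOL-Analysis.Harmonic_Numbers"
begin

text \<open>Take m levels with \<theta> < 2^m, m = O(log \<theta>). For h < m, level h answers the sums over the dyadic
  blocks of length 2^h, and level m answers the prefix sums ending at multiples of 2^m; every prefix sum,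
  hence every range query, is a sum of one answer per level. Moving one record by at most \<theta> < 2^m
  changes at most two answers per level by one, so adding independent discrete Laplace noise of scale
  2(m+1)/\<epsilon> to every answer is private. The error of a range query is a sum over the levels of a
  difference of two noise terms; by the sign symmetry of the noise these m+1 summands are orthogonal,
  so the mean squared error is (m+1) \<cdot> O((m+1)^2/\<epsilon>^2) = O(log^3 \<theta> / \<epsilon>^2).\<close>

text \<open>A bijection from \<nat> \<times> bool onto \<int>; pushing a geometric magnitude and a sign with
  Pr[True] = 1/(1+e^-s) through it gives probability proportional to exp (-s|z|).\<close>

definition signed_geometric :: "nat \<times> bool \<Rightarrow> int" where
  "signed_geometric p = (if snd p then int (fst p) else - int (fst p) - 1)"

definition discrete_laplace :: "real \<Rightarrow> int pmf" where
  "discrete_laplace s = map_pmf signed_geometric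
     (pair_pmf (geometric_pmf (1 - exp (- s))) (bernoulli_pmf (1 / (1 + exp (- s)))))"

lemma inj_signed_geometric: "inj signed_geometric"
  unfolding inj_def signed_geometric_def by auto

lemma surj_signed_geometric: "surj signed_geometric"
  by (rule surjI[where f = "\<lambda>z. if z \<ge> 0 then (nat z, True) else (nat (- z - 1), False)"])
    (simp add: signed_geometric_def)

lemma pmf_discrete_laplace:
  assumes "s > 0"
  shows "pmf (discrete_laplace s) z = (1 - exp (- s)) / (1 + exp (- s)) * exp (- s * \<bar>real_of_int z\<bar>)"
proof -
  define a where "a = exp (- s)"
  have a: "0 < a" "a < 1" using assms by (auto simp: a_def)
  obtain n b where z: "z = signed_geometric (n, b)"
    using surj_signed_geometric by (metis surj_pair surjD)
  have "pmf (discrete_laplace s) z = a ^ n * (1 - a) * (if b then 1 / (1 + a) else 1 - 1 / (1 + a))"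
    using a unfolding z discrete_laplace_def a_def[symmetric] pmf_map_inj'[OF inj_signed_geometric]
    by (simp add: pmf_pair)
  also have "\<dots> = (1 - a) / (1 + a) * a ^ nat \<bar>z\<bar>"
    using a by (cases b) (simp_all add: z signed_geometric_def field_simps nat_add_distrib)
  also have "a ^ nat \<bar>z\<bar> = exp (- s * \<bar>real_of_int z\<bar>)"
    unfolding a_def by (simp add: exp_of_nat_mult[symmetric] mult.commute)
  finally show ?thesis by (simp add: a_def)
qed

lemma pmf_discrete_laplace_uminus:
  assumes "s > 0"
  shows "pmf (discrete_laplace s) (- z) = pmf (discrete_laplace s) z"
  using assms by (simp add: pmf_discrete_laplace)

lemma pmf_discrete_laplace_le_shift:
  assumes "s > 0"
  shows "pmf (discrete_laplace s) w \<le> exp (s * \<bar>real_of_int d\<bar>) * pmf (discrete_laplace s) (w - d)"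
proof -
  have "- s * \<bar>real_of_int w\<bar> \<le> s * \<bar>real_of_int d\<bar> + - s * \<bar>real_of_int (w - d)\<bar>"
    using assms mult_left_mono[OF abs_triangle_ineq4[of "real_of_int w" "real_of_int d"], of s]
    by (simp add: algebra_simps)
  then have "exp (- s * \<bar>real_of_int w\<bar>) \<le> exp (s * \<bar>real_of_int d\<bar>) * exp (- s * \<bar>real_of_int (w - d)\<bar>)"
    by (simp add: exp_add[symmetric])
  moreover have "0 \<le> (1 - exp (- s)) / (1 + exp (- s))"
    using assms by (simp add: add_pos_pos)
  ultimately show ?thesis
    unfolding pmf_discrete_laplace[OF assms] by (metis mult.left_commute mult_left_mono)
qed

lemma square_mult_exp_le:
  fixes s t :: real
  assumes "s > 0" "t \<ge> 0"
  shows "t\<^sup>2 * exp (- s * t) \<le> 16 / s\<^sup>2 * exp (- (s / 2) * t)"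
proof -
  have "s * t / 4 \<le> exp (s * t / 4)"
    using exp_ge_add_one_self[of "s * t / 4"] by linarith
  then have "t * exp (- (s * t / 4)) \<le> 4 / s"
    using assms(1) by (simp add: exp_minus field_simps)
  then have "(t * exp (- (s * t / 4)))\<^sup>2 \<le> (4 / s)\<^sup>2"
    using assms(2) by (intro power_mono) auto
  then have "(t * exp (- (s * t / 4)))\<^sup>2 * exp (- (s / 2) * t) \<le> (4 / s)\<^sup>2 * exp (- (s / 2) * t)"
    by (rule mult_right_mono) simp
  moreover have "(t * exp (- (s * t / 4)))\<^sup>2 * exp (- (s / 2) * t) = t\<^sup>2 * exp (- s * t)"
    by (simp add: power2_eq_square exp_add[symmetric] field_simps)
  ultimately show ?thesis by (simp add: power_divide)
qed

lemma suminf_geometric_weighted_square_le: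
  assumes "s > 0"
  shows "(\<Sum>n. ennreal ((1 - exp (- s)) * exp (- s) ^ (n + j) * (real (n + j))\<^sup>2)) \<le> ennreal (32 / s\<^sup>2)"
proof -
  define b where "b = exp (- (s / 2))"
  have b: "0 < b" "b < 1" using assms by (auto simp: b_def)
  have "exp (- s) = b\<^sup>2"
    unfolding b_def by (simp add: exp_add[symmetric] power2_eq_square)
  then have one_minus: "1 - exp (- s) = (1 - b) * (1 + b)"
    by (simp add: power2_eq_square algebra_simps)
  have term_le: "(1 - exp (- s)) * exp (- s) ^ (n + j) * (real (n + j))\<^sup>2 \<le> 16 / s\<^sup>2 * (1 - exp (- s)) * b ^ n"
    for n
  proof -
    have "(real (n + j))\<^sup>2 * exp (- s * real (n + j)) \<le> 16 / s\<^sup>2 * exp (- (s / 2) * real (n + j))"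
      using assms by (intro square_mult_exp_le) auto
    also have "\<dots> \<le> 16 / s\<^sup>2 * b ^ n"
      unfolding b_def using assms
      by (intro mult_left_mono) (auto simp: exp_of_nat_mult[symmetric] mult.commute)
    finally have "exp (- s) ^ (n + j) * (real (n + j))\<^sup>2 \<le> 16 / s\<^sup>2 * b ^ n"
      by (simp add: exp_of_nat_mult[symmetric] mult.commute)
    then have "(1 - exp (- s)) * (exp (- s) ^ (n + j) * (real (n + j))\<^sup>2) \<le> (1 - exp (- s)) * (16 / s\<^sup>2 * b ^ n)"
      by (rule mult_left_mono) (use assms in simp)
    then show ?thesis by (simp add: mult_ac)
  qed
  have "(\<Sum>n. ennreal ((1 - exp (- s)) * exp (- s) ^ (n + j) * (real (n + j))\<^sup>2))
      \<le> (\<Sum>n. ennreal (16 / s\<^sup>2 * (1 - exp (- s)) * b ^ n))"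
    by (intro suminf_le ennreal_leI term_le) auto
  also have "\<dots> = ennreal (16 / s\<^sup>2 * (1 - exp (- s)) * (1 / (1 - b)))"
    using assms b by (intro suminf_ennreal_eq sums_mult geometric_sums) auto
  also have "16 / s\<^sup>2 * (1 - exp (- s)) * (1 / (1 - b)) = 16 / s\<^sup>2 * (1 + b)"
    using b by (simp add: one_minus)
  also have "\<dots> \<le> 32 / s\<^sup>2"
    using b assms by (simp add: field_simps)
  finally show ?thesis by (simp add: ennreal_leI)
qed

lemma discrete_laplace_second_moment_le:
  assumes "s > 0"
  shows "(\<integral>\<^sup>+z. ennreal ((real_of_int z)\<^sup>2) \<partial>discrete_laplace s) \<le> ennreal (64 / s\<^sup>2)"
proof -
  define a where "a = exp (- s)"
  define p where "p = 1 / (1 + a)"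
  have a: "0 < a" "a < 1" using assms by (auto simp: a_def)
  have p: "0 \<le> p" "p \<le> 1" "1 - p \<le> a" using a by (auto simp: p_def field_simps)
  define g where "g j n = ennreal ((1 - a) * a ^ (n + j) * (real (n + j))\<^sup>2)" for j n
  have square_signed: "(real_of_int (signed_geometric (n, b)))\<^sup>2 = (if b then (real n)\<^sup>2 else (real n + 1)\<^sup>2)"
    for n b by (simp add: signed_geometric_def power2_eq_square algebra_simps)
  have "(\<integral>\<^sup>+z. ennreal ((real_of_int z)\<^sup>2) \<partial>discrete_laplace s)
      = (\<integral>\<^sup>+n. \<integral>\<^sup>+b. ennreal ((real_of_int (signed_geometric (n, b)))\<^sup>2) \<partial>bernoulli_pmf p \<partial>geometric_pmf (1 - a))"
    unfolding discrete_laplace_def nn_integral_map_pmf nn_integral_pair_pmf' a_def p_def ..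
  also have "\<dots> = (\<integral>\<^sup>+n. ennreal ((real n)\<^sup>2) * p + ennreal ((real n + 1)\<^sup>2) * (1 - p) \<partial>geometric_pmf (1 - a))"
    by (subst nn_integral_bernoulli_pmf[OF p(1,2)]) (simp_all only: square_signed if_True if_False zero_le)
  also have "\<dots> = (\<Sum>n. ennreal (a ^ n * (1 - a)) * (ennreal ((real n)\<^sup>2) * p + ennreal ((real n + 1)\<^sup>2) * (1 - p)))"
    using a by (simp add: nn_integral_measure_pmf nn_integral_count_space_nat)
  also have "\<dots> \<le> (\<Sum>n. g 0 n + g 1 n)"
  proof (intro suminf_le)
    fix n
    have "a ^ n * (1 - a) * ((real n)\<^sup>2 * p + (real n + 1)\<^sup>2 * (1 - p))
        \<le> (1 - a) * a ^ n * (real n)\<^sup>2 + (1 - a) * a ^ (n + 1) * (real (n + 1))\<^sup>2"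
    proof -
      have "(real n)\<^sup>2 * p + (real n + 1)\<^sup>2 * (1 - p) \<le> (real n)\<^sup>2 + (real n + 1)\<^sup>2 * a"
        using p by (intro add_mono mult_left_le mult_left_mono) auto
      then have "a ^ n * (1 - a) * ((real n)\<^sup>2 * p + (real n + 1)\<^sup>2 * (1 - p))
          \<le> a ^ n * (1 - a) * ((real n)\<^sup>2 + (real n + 1)\<^sup>2 * a)"
        using a by (intro mult_left_mono) auto
      then show ?thesis by (simp add: algebra_simps)
    qed
    then show "ennreal (a ^ n * (1 - a)) * (ennreal ((real n)\<^sup>2) * p + ennreal ((real n + 1)\<^sup>2) * (1 - p)) \<le> g 0 n + g 1 n"
      using a p by (simp add: g_def ennreal_mult''[symmetric] ennreal_plus[symmetric] del: ennreal_plus)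
  qed auto
  also have "\<dots> = (\<Sum>n. g 0 n) + (\<Sum>n. g 1 n)"
    by (rule suminf_add[symmetric]) auto
  also have "\<dots> \<le> ennreal (32 / s\<^sup>2) + ennreal (32 / s\<^sup>2)"
    unfolding g_def a_def by (intro add_mono suminf_geometric_weighted_square_le assms)
  also have "\<dots> = ennreal (64 / s\<^sup>2)"
    by (simp add: ennreal_plus[symmetric] del: ennreal_plus)
  finally show ?thesis .
qed

definition laplace_noise :: "'i set \<Rightarrow> real \<Rightarrow> ('i \<Rightarrow> int) pmf" where
  "laplace_noise I s = Pi_pmf I 0 (\<lambda>_. discrete_laplace s)"

lemma pmf_laplace_noise_le_shift:
  assumes I: "finite I" and s: "s > 0" and d: "\<And>i. i \<notin> I \<Longrightarrow> d i = 0"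
  shows "pmf (laplace_noise I s) w
    \<le> exp (s * (\<Sum>i\<in>I. \<bar>real_of_int (d i)\<bar>)) * pmf (laplace_noise I s) (\<lambda>i. w i - d i)"
proof (cases "\<forall>i. i \<notin> I \<longrightarrow> w i = 0")
  case True
  have "(\<Prod>i\<in>I. pmf (discrete_laplace s) (w i))
      \<le> (\<Prod>i\<in>I. exp (s * \<bar>real_of_int (d i)\<bar>) * pmf (discrete_laplace s) (w i - d i))"
    by (intro prod_mono conjI pmf_nonneg pmf_discrete_laplace_le_shift[OF s])
  also have "\<dots> = exp (s * (\<Sum>i\<in>I. \<bar>real_of_int (d i)\<bar>)) * (\<Prod>i\<in>I. pmf (discrete_laplace s) (w i - d i))"
    using I by (simp add: prod.distrib exp_sum sum_distrib_left)
  finally show ?thesis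
    unfolding laplace_noise_def pmf_Pi[OF I] using True d by simp
next
  case False
  then have "pmf (laplace_noise I s) w = 0"
    unfolding laplace_noise_def pmf_Pi[OF I] by auto
  then show ?thesis by simp
qed

lemma laplace_noise_negate_invariant:
  assumes I: "finite I" and s: "s > 0"
  shows "map_pmf (\<lambda>z i. if i \<in> A then - z i else z i) (laplace_noise I s) = laplace_noise I s"
proof -
  define negate where "negate = (\<lambda>z i. if i \<in> A then - z i else (z i :: int))"
  have involution: "negate (negate z) = z" for z
    by (simp add: negate_def fun_eq_iff)
  then have "inj negate" by (metis injI)
  have "map_pmf negate (laplace_noise I s) = laplace_noise I s"
  proof (rule pmf_eqI)
    fix w
    have "pmf (map_pmf negate (laplace_noise I s)) w = pmf (laplace_noise I s) (negate w)"
      using pmf_map_inj'[OF \<open>inj negate\<close>, of _ "negate w"] by (simp add: involution)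
    also have "\<dots> = pmf (laplace_noise I s) w"
      unfolding laplace_noise_def pmf_Pi[OF I] negate_def
      by (auto simp: if_distrib pmf_discrete_laplace_uminus[OF s] intro!: prod.cong)
    finally show "pmf (map_pmf negate (laplace_noise I s)) w = pmf (laplace_noise I s) w" .
  qed
  then show ?thesis by (simp add: negate_def)
qed

lemma nn_integral_laplace_noise_component:
  assumes "finite I" "i \<in> I"
  shows "(\<integral>\<^sup>+z. f (z i) \<partial>laplace_noise I s) = (\<integral>\<^sup>+t. f t \<partial>discrete_laplace s)"
proof -
  have "map_pmf (\<lambda>z. z i) (laplace_noise I s) = discrete_laplace s"
    unfolding laplace_noise_def using assms by (simp add: Pi_pmf_component)
  then show ?thesis
    by (metis nn_integral_map_pmf)
qed

lemma laplace_noise_diff_second_moment_le: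
  assumes I: "finite I" "i \<in> I" "j \<in> I" and s: "s > 0"
  shows "(\<integral>\<^sup>+z. ennreal ((real_of_int (z i) - real_of_int (z j))\<^sup>2) \<partial>laplace_noise I s) \<le> ennreal (256 / s\<^sup>2)"
proof -
  have four_times: "2 * ennreal c + 2 * ennreal c = ennreal (4 * c)" if "0 \<le> c" for c :: real
    using that by (simp add: ennreal_mult flip: distrib_right)
  define M where "M = (\<integral>\<^sup>+t. ennreal ((real_of_int t)\<^sup>2) \<partial>discrete_laplace s)"
  have "(\<integral>\<^sup>+z. ennreal ((real_of_int (z i) - real_of_int (z j))\<^sup>2) \<partial>laplace_noise I s)
      \<le> (\<integral>\<^sup>+z. 2 * ennreal ((real_of_int (z i))\<^sup>2) + 2 * ennreal ((real_of_int (z j))\<^sup>2) \<partial>laplace_noise I s)"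
  proof (rule nn_integral_mono)
    fix z :: "'a \<Rightarrow> int"
    have "(real_of_int (z i) - real_of_int (z j))\<^sup>2 \<le> 2 * (real_of_int (z i))\<^sup>2 + 2 * (real_of_int (z j))\<^sup>2"
      using zero_le_power2[of "real_of_int (z i) + real_of_int (z j)"]
      unfolding power2_diff power2_sum by linarith
    moreover have "ennreal (2 * (real_of_int (z i))\<^sup>2 + 2 * (real_of_int (z j))\<^sup>2)
        = 2 * ennreal ((real_of_int (z i))\<^sup>2) + 2 * ennreal ((real_of_int (z j))\<^sup>2)"
      by (simp add: ennreal_plus ennreal_mult)
    ultimately show "ennreal ((real_of_int (z i) - real_of_int (z j))\<^sup>2)
        \<le> 2 * ennreal ((real_of_int (z i))\<^sup>2) + 2 * ennreal ((real_of_int (z j))\<^sup>2)"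
      by (metis ennreal_leI)
  qed
  also have "\<dots> = 2 * M + 2 * M"
    using nn_integral_laplace_noise_component[OF I(1,2), where f = "\<lambda>t. ennreal ((real_of_int t)\<^sup>2)"]
      nn_integral_laplace_noise_component[OF I(1,3), where f = "\<lambda>t. ennreal ((real_of_int t)\<^sup>2)"]
    by (simp add: nn_integral_add nn_integral_cmult M_def)
  also have "\<dots> \<le> 2 * ennreal (64 / s\<^sup>2) + 2 * ennreal (64 / s\<^sup>2)"
    unfolding M_def by (intro add_mono mult_left_mono discrete_laplace_second_moment_le s) auto
  also have "\<dots> = ennreal (256 / s\<^sup>2)"
    using four_times[of "64 / s\<^sup>2"] by simp
  finally show ?thesis .
qed

text \<open>Reflecting by flip h negates W h and fixes the other summands, so the cross terms of the
  square cancel: E[(W + S)^2] = E[(-W + S)^2], and the average of the two is E[W^2] + E[S^2].\<close>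

lemma nn_integral_square_sum_sign_symmetric:
  fixes P :: "'a pmf" and W :: "'b \<Rightarrow> 'a \<Rightarrow> real" and flip :: "'b \<Rightarrow> 'a \<Rightarrow> 'a"
  assumes "finite H"
    and invariant: "\<And>h. map_pmf (flip h) P = P"
    and flip: "\<And>h h' z. W h (flip h' z) = (if h = h' then - W h z else W h z)"
  shows "(\<integral>\<^sup>+z. ennreal ((\<Sum>h\<in>H. W h z)\<^sup>2) \<partial>P) = (\<Sum>h\<in>H. \<integral>\<^sup>+z. ennreal ((W h z)\<^sup>2) \<partial>P)"
  using \<open>finite H\<close>
proof (induction H rule: finite_induct)
  case empty
  then show ?case by simp
next
  case (insert h H)
  define S where "S z = (\<Sum>h'\<in>H. W h' z)" for z
  have S_flip: "S (flip h z) = S z" for z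
    unfolding S_def using insert.hyps(2) by (intro sum.cong) (auto simp: flip)
  define X where "X = (\<integral>\<^sup>+z. ennreal ((W h z + S z)\<^sup>2) \<partial>P)"
  have X_flip: "X = (\<integral>\<^sup>+z. ennreal ((- W h z + S z)\<^sup>2) \<partial>P)"
    unfolding X_def
    by (subst (1) invariant[of h, symmetric]) (simp add: S_flip flip)
  have "X + X = (\<integral>\<^sup>+z. ennreal ((W h z + S z)\<^sup>2) + ennreal ((- W h z + S z)\<^sup>2) \<partial>P)"
    by (subst (2) X_flip) (simp add: X_def nn_integral_add)
  also have "\<dots> = (\<integral>\<^sup>+z. (ennreal ((W h z)\<^sup>2) + ennreal ((S z)\<^sup>2)) + (ennreal ((W h z)\<^sup>2) + ennreal ((S z)\<^sup>2)) \<partial>P)"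
  proof (rule nn_integral_cong)
    fix z
    have "(W h z + S z)\<^sup>2 + (- W h z + S z)\<^sup>2 = ((W h z)\<^sup>2 + (S z)\<^sup>2) + ((W h z)\<^sup>2 + (S z)\<^sup>2)"
      by (simp add: power2_eq_square algebra_simps)
    then show "ennreal ((W h z + S z)\<^sup>2) + ennreal ((- W h z + S z)\<^sup>2)
        = (ennreal ((W h z)\<^sup>2) + ennreal ((S z)\<^sup>2)) + (ennreal ((W h z)\<^sup>2) + ennreal ((S z)\<^sup>2))"
      by (simp add: ennreal_plus[symmetric] del: ennreal_plus)
  qed
  also have "\<dots> = ((\<integral>\<^sup>+z. ennreal ((W h z)\<^sup>2) \<partial>P) + (\<integral>\<^sup>+z. ennreal ((S z)\<^sup>2) \<partial>P))
      + ((\<integral>\<^sup>+z. ennreal ((W h z)\<^sup>2) \<partial>P) + (\<integral>\<^sup>+z. ennreal ((S z)\<^sup>2) \<partial>P))"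
    by (simp add: nn_integral_add)
  finally have "X = (\<integral>\<^sup>+z. ennreal ((W h z)\<^sup>2) \<partial>P) + (\<integral>\<^sup>+z. ennreal ((S z)\<^sup>2) \<partial>P)"
    by (metis add_strict_mono linorder_less_linear order_less_imp_not_eq)
  then show ?case
    using insert by (simp add: X_def S_def)
qed

lemma measure_pmf_le_if_pmf_le:
  fixes p q :: "'a pmf"
  assumes "\<And>w. pmf p w \<le> c * pmf q w" "0 \<le> c"
  shows "measure p A \<le> c * measure q A"
proof -
  have emeasure_eq: "emeasure r A = (\<integral>\<^sup>+w. ennreal (pmf r w) * indicator A w \<partial>count_space UNIV)" for r :: "'a pmf"
    by (subst nn_integral_measure_pmf[symmetric]) simp
  have "emeasure p A \<le> (\<integral>\<^sup>+w. ennreal c * (ennreal (pmf q w) * indicator A w) \<partial>count_space UNIV)"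
    unfolding emeasure_eq using assms
    by (intro nn_integral_mono) (auto simp: indicator_def ennreal_mult[symmetric] intro!: ennreal_leI)
  also have "\<dots> = ennreal c * emeasure q A"
    unfolding emeasure_eq by (rule nn_integral_cmult) simp
  finally show ?thesis
    using assms(2) by (simp add: measure_pmf.emeasure_eq_measure ennreal_mult[symmetric])
qed

definition prefix_sum :: "(nat \<Rightarrow> real) \<Rightarrow> nat \<Rightarrow> real" where
  "prefix_sum x t = (\<Sum>i\<in>{0<..t}. x i)"

lemma sum_greaterThanAtMost_eq_prefix_sum_diff:
  assumes "lo \<le> hi"
  shows "(\<Sum>i\<in>{lo<..hi}. x i) = prefix_sum x hi - prefix_sum x lo"
proof -
  have "{0<..hi} = {0<..lo} \<union> {lo<..hi}" "{0<..lo} \<inter> {lo<..hi} = {}"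
    using assms by auto
  then show ?thesis
    unfolding prefix_sum_def by (simp add: sum.union_disjoint)
qed

lemma range_query_eq_prefix_sum_diff:
  assumes "1 \<le> l" "l \<le> r"
  shows "range_query (l, r) x = prefix_sum x r - prefix_sum x (l - 1)"
proof -
  have "{l..r} = {l - 1<..r}" using assms by auto
  then show ?thesis
    unfolding range_query_def using assms by (simp add: sum_greaterThanAtMost_eq_prefix_sum_diff)
qed

text \<open>For h < m and odd a, the block of level h and index a is the dyadic interval
  ((a - 1) 2^h, a 2^h]; for even a it is empty. The blocks of level m are the prefixes (0, a 2^m].\<close>

definition dyadic_block :: "nat \<Rightarrow> nat \<Rightarrow> nat \<Rightarrow> nat set" where
  "dyadic_block m h a = (if h < m then {a div 2 * 2 ^ (h + 1) <.. a * 2 ^ h} else {0 <.. a * 2 ^ m})"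

definition block_sum :: "nat \<Rightarrow> nat \<Rightarrow> nat \<Rightarrow> (nat \<Rightarrow> real) \<Rightarrow> real" where
  "block_sum m h a x = (\<Sum>i\<in>dyadic_block m h a. x i)"

text \<open>j div 2^h * 2^h rounds j down to a multiple of 2^h, and the level-h block indexed by
  j div 2^h is the gap between the roundings of j at levels h + 1 and h; so the sum telescopes.\<close>

lemma sum_block_sum_eq_prefix_sum: "(\<Sum>h\<le>m. block_sum m h (j div 2 ^ h) x) = prefix_sum x j"
proof -
  define f where "f h = prefix_sum x (j div 2 ^ h * 2 ^ h)" for h
  have round_le: "a div 2 * 2 ^ (h + 1) \<le> a * 2 ^ h" for a h :: nat
  proof -
    have "a div 2 * 2 ^ (h + 1) = (a div 2 * 2) * 2 ^ h" by simp
    also have "\<dots> \<le> a * 2 ^ h" by (intro mult_right_mono) simp_all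
    finally show ?thesis .
  qed
  have lower: "block_sum m h (j div 2 ^ h) x = f h - f (Suc h)" if "h < m" for h
  proof -
    have "block_sum m h (j div 2 ^ h) x = (\<Sum>i\<in>{j div 2 ^ h div 2 * 2 ^ (h + 1)<..j div 2 ^ h * 2 ^ h}. x i)"
      using that by (simp add: block_sum_def dyadic_block_def)
    also have "\<dots> = prefix_sum x (j div 2 ^ h * 2 ^ h) - prefix_sum x (j div 2 ^ h div 2 * 2 ^ (h + 1))"
      by (rule sum_greaterThanAtMost_eq_prefix_sum_diff[OF round_le])
    also have "j div 2 ^ h div 2 * 2 ^ (h + 1) = j div 2 ^ Suc h * 2 ^ Suc h"
      by (metis div_mult2_eq power_Suc2 Suc_eq_plus1)
    finally show ?thesis unfolding f_def .
  qed
  have "(\<Sum>h\<le>m. block_sum m h (j div 2 ^ h) x) = (\<Sum>h<m. f h - f (Suc h)) + block_sum m m (j div 2 ^ m) x"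
    by (simp add: lessThan_Suc_atMost[symmetric] lower)
  also have "(\<Sum>h<m. f h - f (Suc h)) = f 0 - f m"
    by (rule sum_lessThan_telescope')
  also have "block_sum m m (j div 2 ^ m) x = f m"
    by (simp add: block_sum_def dyadic_block_def f_def prefix_sum_def)
  finally show ?thesis by (simp add: f_def)
qed

definition noisy_prefix_sum :: "nat \<Rightarrow> (nat \<Rightarrow> real) \<Rightarrow> (nat \<times> nat \<Rightarrow> int) \<Rightarrow> nat \<Rightarrow> real" where
  "noisy_prefix_sum m x z j = (\<Sum>h\<le>m. block_sum m h (j div 2 ^ h) x + real_of_int (z (h, j div 2 ^ h)))"

definition range_estimate :: "nat \<Rightarrow> (nat \<Rightarrow> real) \<Rightarrow> (nat \<times> nat \<Rightarrow> int) \<Rightarrow> nat \<times> nat \<Rightarrow> real" where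
  "range_estimate m x z q = noisy_prefix_sum m x z (snd q) - noisy_prefix_sum m x z (fst q - 1)"

lemma range_estimate_error:
  assumes "1 \<le> l" "l \<le> r"
  shows "range_estimate m x z (l, r) - range_query (l, r) x
    = (\<Sum>h\<le>m. real_of_int (z (h, r div 2 ^ h)) - real_of_int (z (h, (l - 1) div 2 ^ h)))"
  unfolding range_estimate_def noisy_prefix_sum_def sum.distrib sum_block_sum_eq_prefix_sum
    range_query_eq_prefix_sum_diff[OF assms]
  by (simp add: sum_subtractf)

definition strategy_index :: "nat \<Rightarrow> nat \<Rightarrow> (nat \<times> nat) set" where
  "strategy_index m k = {..m} \<times> {..k}"

lemma finite_strategy_index: "finite (strategy_index m k)"
  by (simp add: strategy_index_def)

definition move_record_shift :: "nat \<Rightarrow> nat \<Rightarrow> nat \<Rightarrow> nat \<Rightarrow> nat \<times> nat \<Rightarrow> int" where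
  "move_record_shift m k u v i = (if i \<in> strategy_index m k
     then of_bool (v \<in> dyadic_block m (fst i) (snd i)) - of_bool (u \<in> dyadic_block m (fst i) (snd i))
     else 0)"

lemma block_sum_move_record:
  assumes "u \<noteq> v"
  shows "block_sum m h a (x(u := x u - 1, v := x v + 1))
    = block_sum m h a x + real_of_int (of_bool (v \<in> dyadic_block m h a) - of_bool (u \<in> dyadic_block m h a))"
proof -
  have "x(u := x u - 1, v := x v + 1) = (\<lambda>i. x i + of_bool (i = v) - of_bool (i = u))"
    using assms by auto
  moreover have "finite (dyadic_block m h a)"
    by (simp add: dyadic_block_def)
  ultimately show ?thesis
    unfolding block_sum_def by (simp add: sum.distrib sum_subtractf)
qed

lemma range_estimate_move_record:
  assumes "u \<noteq> v" "q \<in> range_queries k"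
  shows "range_estimate m (x(u := x u - 1, v := x v + 1)) z q
    = range_estimate m x (\<lambda>i. z i + move_record_shift m k u v i) q"
proof -
  have "noisy_prefix_sum m (x(u := x u - 1, v := x v + 1)) z j
      = noisy_prefix_sum m x (\<lambda>i. z i + move_record_shift m k u v i) j" if "j \<le> k" for j
    unfolding noisy_prefix_sum_def
  proof (rule sum.cong[OF refl])
    fix h assume "h \<in> {..m}"
    moreover have "j div 2 ^ h \<le> k"
      using that div_le_dividend le_trans by blast
    ultimately have "(h, j div 2 ^ h) \<in> strategy_index m k"
      by (simp add: strategy_index_def)
    then show "block_sum m h (j div 2 ^ h) (x(u := x u - 1, v := x v + 1)) + real_of_int (z (h, j div 2 ^ h))
        = block_sum m h (j div 2 ^ h) x + real_of_int (z (h, j div 2 ^ h) + move_record_shift m k u v (h, j div 2 ^ h))"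
      by (simp add: block_sum_move_record[OF assms(1)] move_record_shift_def)
  qed
  moreover obtain l r where "q = (l, r)" "l - 1 \<le> k" "r \<le> k"
    using assms(2) by (auto simp: range_queries_def)
  ultimately show ?thesis
    by (simp add: range_estimate_def)
qed

lemma nat_eq_if_mult_close:
  fixes a b c :: nat
  assumes "a * c < (b + 1) * c" "b * c < (a + 1) * c"
  shows "a = b"
  using mult_less_cancel2[THEN iffD1, THEN conjunct2, OF assms(1)]
    mult_less_cancel2[THEN iffD1, THEN conjunct2, OF assms(2)]
  by simp

lemma dyadic_block_unique:
  assumes "h < m" "w \<in> dyadic_block m h a" "w \<in> dyadic_block m h b"
  shows "a = b"
proof -
  have window: "c * 2 ^ h < w + 2 ^ h \<and> w \<le> c * 2 ^ h" if "w \<in> dyadic_block m h c" for c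
  proof -
    have "c \<le> c div 2 * 2 + 1" by linarith
    then have "c * 2 ^ h \<le> c div 2 * 2 ^ (h + 1) + 2 ^ h"
      using mult_le_mono1[of c "c div 2 * 2 + 1" "2 ^ h"] by (simp add: algebra_simps)
    then show ?thesis using that assms(1) by (auto simp: dyadic_block_def)
  qed
  show ?thesis
    using window[OF assms(2)] window[OF assms(3)]
    by (intro nat_eq_if_mult_close[of _ "2 ^ h"]) (auto simp: algebra_simps)
qed

lemma sum_abs_block_indicator_diff_le:
  assumes "h \<le> m" "1 \<le> u" "1 \<le> v" "\<bar>int u - int v\<bar> \<le> int \<theta>" "\<theta> < 2 ^ m"
  shows "(\<Sum>a\<le>k. \<bar>real_of_int (of_bool (v \<in> dyadic_block m h a) - of_bool (u \<in> dyadic_block m h a))\<bar>) \<le> 2"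
proof (cases "h < m")
  case True
  have card_le: "card ({..k} \<inter> {a. w \<in> dyadic_block m h a}) \<le> 1" for w
    unfolding One_nat_def by (subst card_le_Suc0_iff_eq) (auto intro: dyadic_block_unique[OF True])
  have "(\<Sum>a\<le>k. \<bar>real_of_int (of_bool (v \<in> dyadic_block m h a) - of_bool (u \<in> dyadic_block m h a))\<bar>)
      \<le> (\<Sum>a\<le>k. of_bool (v \<in> dyadic_block m h a) + of_bool (u \<in> dyadic_block m h a))"
    by (intro sum_mono) auto
  also have "\<dots> = real (card ({..k} \<inter> {a. v \<in> dyadic_block m h a})) + real (card ({..k} \<inter> {a. u \<in> dyadic_block m h a}))"
    by (simp add: sum.distrib)
  also have "\<dots> \<le> 2"
    using card_le[of v] card_le[of u] by linarith
  finally show ?thesis .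
next
  case False
  then have top: "h = m" using assms(1) by simp
  \<comment> \<open>A top-level prefix changes only if it ends between u and v, and |u - v| < 2^m leaves room for one.\<close>
  define separates where "separates a \<longleftrightarrow> (u \<le> a * 2 ^ m) \<noteq> (v \<le> a * 2 ^ m)" for a
  have close: "a * 2 ^ m < (b + 1) * 2 ^ m" if "separates a" "separates b" for a b
  proof -
    have "a * 2 ^ m < max u v" "min u v \<le> b * 2 ^ m"
      using that by (auto simp: separates_def)
    moreover have "max u v \<le> min u v + \<theta>"
      using assms(4) by linarith
    ultimately have "a * 2 ^ m < b * 2 ^ m + 2 ^ m"
      using assms(5) by linarith
    then show ?thesis by (simp add: algebra_simps)
  qed
  have "card ({..k} \<inter> {a. separates a}) \<le> 1"
    unfolding One_nat_def by (subst card_le_Suc0_iff_eq) (auto intro: nat_eq_if_mult_close close)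
  moreover have "\<bar>real_of_int (of_bool (v \<in> dyadic_block m h a) - of_bool (u \<in> dyadic_block m h a))\<bar>
      = of_bool (separates a)" for a
    using assms(2,3) top by (auto simp: dyadic_block_def separates_def)
  ultimately show ?thesis by simp
qed

lemma sum_abs_move_record_shift_le:
  assumes "1 \<le> u" "1 \<le> v" "\<bar>int u - int v\<bar> \<le> int \<theta>" "\<theta> < 2 ^ m"
  shows "(\<Sum>i\<in>strategy_index m k. \<bar>real_of_int (move_record_shift m k u v i)\<bar>) \<le> 2 * (real m + 1)"
proof -
  have "(\<Sum>i\<in>strategy_index m k. \<bar>real_of_int (move_record_shift m k u v i)\<bar>)
      = (\<Sum>h\<le>m. \<Sum>a\<le>k. \<bar>real_of_int (of_bool (v \<in> dyadic_block m h a) - of_bool (u \<in> dyadic_block m h a))\<bar>)"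
    unfolding strategy_index_def sum.cartesian_product
    by (rule sum.cong) (auto simp: move_record_shift_def strategy_index_def)
  also have "\<dots> \<le> (\<Sum>h\<le>m. 2)"
    using assms by (intro sum_mono sum_abs_block_indicator_diff_le) auto
  finally show ?thesis by simp
qed

definition range_mechanism :: "nat \<Rightarrow> nat \<Rightarrow> real \<Rightarrow> (nat \<Rightarrow> real) \<Rightarrow> (nat \<times> nat \<Rightarrow> real) measure" where
  "range_mechanism m k s x = distr (laplace_noise (strategy_index m k) s) (output_space k)
     (\<lambda>z. restrict (range_estimate m x z) (range_queries k))"

lemma measurable_range_estimates:
  "(\<lambda>z. restrict (range_estimate m x z) (range_queries k)) \<in> measurable (measure_pmf p) (output_space k)"
  unfolding output_space_def by (auto simp: space_PiM)

lemma prob_space_range_mechanism: "prob_space (range_mechanism m k s x)"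
  unfolding range_mechanism_def by (rule measure_pmf.prob_space_distr[OF measurable_range_estimates])

lemma sets_range_mechanism: "sets (range_mechanism m k s x) = sets (output_space k)"
  by (simp add: range_mechanism_def)

lemma measure_range_mechanism:
  assumes "S \<in> sets (output_space k)"
  shows "measure (range_mechanism m k s x) S
    = measure (laplace_noise (strategy_index m k) s) ((\<lambda>z. restrict (range_estimate m x z) (range_queries k)) -` S)"
  unfolding range_mechanism_def using assms
  by (subst measure_distr[OF measurable_range_estimates]) auto

lemma range_mechanism_blowfish_private:
  assumes s: "s > 0" and m: "\<theta> < 2 ^ m" and \<epsilon>: "s * (2 * (real m + 1)) \<le> \<epsilon>"
  shows "blowfish_private \<epsilon> \<theta> k (range_mechanism m k s)"
  unfolding blowfish_private_def
proof (intro conjI allI impI ballI prob_space_range_mechanism sets_range_mechanism)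
  fix x x' S
  assume "blowfish_neighbors \<theta> k x x'" and S: "S \<in> sets (output_space k)"
  then obtain u v where uv: "u \<in> {1..k}" "v \<in> {1..k}" "u \<noteq> v" "\<bar>int u - int v\<bar> \<le> int \<theta>"
    and x': "x' = x(u := x u - 1, v := x v + 1)"
    unfolding blowfish_neighbors_def by blast
  define P where "P = laplace_noise (strategy_index m k) s"
  define d where "d = move_record_shift m k u v"
  define shift where "shift = (\<lambda>(z :: nat \<times> nat \<Rightarrow> int) i. z i + d i)"
  define out where "out y = (\<lambda>z. restrict (range_estimate m y z) (range_queries k))" for y
  have "inj shift"
    unfolding shift_def inj_def by (auto simp: fun_eq_iff)
  have "s * (\<Sum>i\<in>strategy_index m k. \<bar>real_of_int (d i)\<bar>) \<le> s * (2 * (real m + 1))"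
    unfolding d_def using s uv m by (intro mult_left_mono sum_abs_move_record_shift_le) auto
  then have "exp (s * (\<Sum>i\<in>strategy_index m k. \<bar>real_of_int (d i)\<bar>)) \<le> exp \<epsilon>"
    using \<epsilon> by simp
  moreover have "d i = 0" if "i \<notin> strategy_index m k" for i
    using that by (simp add: d_def move_record_shift_def)
  ultimately have "pmf P w \<le> exp \<epsilon> * pmf P (\<lambda>i. w i - d i)" for w
    unfolding P_def
    using pmf_laplace_noise_le_shift[OF finite_strategy_index s, where d = d and w = w]
    by (meson mult_right_mono order.trans pmf_nonneg)
  moreover have "pmf (map_pmf shift P) w = pmf P (\<lambda>i. w i - d i)" for w
  proof -
    have "w = shift (\<lambda>i. w i - d i)" by (simp add: shift_def)
    then show ?thesis using pmf_map_inj'[OF \<open>inj shift\<close>] by metis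
  qed
  ultimately have "measure P (out x -` S) \<le> exp \<epsilon> * measure (map_pmf shift P) (out x -` S)"
    by (intro measure_pmf_le_if_pmf_le) auto
  also have "measure (map_pmf shift P) (out x -` S) = measure P (out x' -` S)"
    unfolding measure_map_pmf x' out_def shift_def d_def
    by (simp add: vimage_def range_estimate_move_record[OF uv(3)] restrict_def cong: if_cong)
  finally show "measure (range_mechanism m k s x) S \<le> exp \<epsilon> * measure (range_mechanism m k s x') S"
    unfolding measure_range_mechanism[OF S] P_def out_def .
qed

lemma range_mechanism_query_error_le:
  assumes s: "s > 0" and q: "q \<in> range_queries k"
  shows "(\<integral>\<^sup>+y. ennreal ((range_query q x - y q)\<^sup>2) \<partial>range_mechanism m k s x) \<le> ennreal ((real m + 1) * (256 / s\<^sup>2))"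
proof -
  obtain l r where lr: "q = (l, r)" "1 \<le> l" "l \<le> r" "r \<le> k"
    using q unfolding range_queries_def by auto
  define P where "P = laplace_noise (strategy_index m k) s"
  define W where "W h z = real_of_int (z (h, r div 2 ^ h)) - real_of_int (z (h, (l - 1) div 2 ^ h))" for h z
  define flip where "flip h = (\<lambda>(z :: nat \<times> nat \<Rightarrow> int) i. if i \<in> {i. fst i = h} then - z i else z i)"
    for h :: nat
  have in_index: "(h, j div 2 ^ h) \<in> strategy_index m k" if "h \<le> m" "j \<le> k" for h j
    using that by (auto simp: strategy_index_def intro: le_trans[OF div_le_dividend])
  have "(\<integral>\<^sup>+y. ennreal ((range_query q x - y q)\<^sup>2) \<partial>range_mechanism m k s x)
      = (\<integral>\<^sup>+z. ennreal ((range_query q x - range_estimate m x z q)\<^sup>2) \<partial>P)"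
    unfolding range_mechanism_def P_def using q
    by (subst nn_integral_distr[OF measurable_range_estimates]) (auto simp: output_space_def)
  also have "\<dots> = (\<integral>\<^sup>+z. ennreal ((\<Sum>h\<le>m. W h z)\<^sup>2) \<partial>P)"
  proof (rule nn_integral_cong)
    fix z
    have "range_query q x - range_estimate m x z q = - (\<Sum>h\<le>m. W h z)"
      using range_estimate_error[OF lr(2,3), of m x z] lr(1) by (simp add: W_def)
    then show "ennreal ((range_query q x - range_estimate m x z q)\<^sup>2) = ennreal ((\<Sum>h\<le>m. W h z)\<^sup>2)"
      by simp
  qed
  also have "\<dots> = (\<Sum>h\<le>m. \<integral>\<^sup>+z. ennreal ((W h z)\<^sup>2) \<partial>P)"
  proof (rule nn_integral_square_sum_sign_symmetric[where flip = flip])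
    show "map_pmf (flip h) P = P" for h
      unfolding P_def flip_def by (rule laplace_noise_negate_invariant[OF finite_strategy_index s])
    show "W h (flip h' z) = (if h = h' then - W h z else W h z)" for h h' z
      by (simp add: W_def flip_def)
  qed simp
  also have "\<dots> \<le> (\<Sum>h\<le>m. ennreal (256 / s\<^sup>2))"
    unfolding P_def W_def using lr
    by (intro sum_mono laplace_noise_diff_second_moment_le finite_strategy_index in_index s) auto
  also have "\<dots> = ennreal (real (Suc m)) * ennreal (256 / s\<^sup>2)"
    by (simp only: sum_constant card_atMost ennreal_of_nat_eq_real_of_nat)
  also have "\<dots> = ennreal ((real m + 1) * (256 / s\<^sup>2))"
    by (subst ennreal_mult) (auto simp: add.commute)
  finally show ?thesis .
qed

lemma error_per_query_le:
  assumes "k \<ge> 1"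
    and "\<And>x q. x \<in> databases k \<Longrightarrow> q \<in> range_queries k \<Longrightarrow>
      (\<integral>\<^sup>+y. ennreal ((range_query q x - y q)\<^sup>2) \<partial>M x) \<le> B"
  shows "error_per_query k M \<le> B"
proof -
  let ?n = "of_nat (card (range_queries k)) :: ennreal"
  have "finite (range_queries k)"
    by (rule finite_subset[of _ "{1..k} \<times> {1..k}"]) (auto simp: range_queries_def)
  moreover have "(1, 1) \<in> range_queries k"
    using assms(1) by (simp add: range_queries_def)
  ultimately have "?n \<noteq> 0"
    by (auto simp: card_gt_0_iff)
  have "(\<Sum>q\<in>range_queries k. \<integral>\<^sup>+y. ennreal ((range_query q x - y q)\<^sup>2) \<partial>M x) \<le> ?n * B"
    if "x \<in> databases k" for x
  proof -
    have "(\<Sum>q\<in>range_queries k. \<integral>\<^sup>+y. ennreal ((range_query q x - y q)\<^sup>2) \<partial>M x)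
        \<le> (\<Sum>q\<in>range_queries k. B)"
      using assms(2)[OF that] by (rule sum_mono)
    then show ?thesis by simp
  qed
  then have "(SUP x\<in>databases k. \<Sum>q\<in>range_queries k. \<integral>\<^sup>+y. ennreal ((range_query q x - y q)\<^sup>2) \<partial>M x) \<le> ?n * B"
    by (rule SUP_least)
  then have "error_per_query k M \<le> ?n * B / ?n"
    unfolding error_per_query_def by (rule divide_right_mono_ennreal)
  also have "\<dots> = B"
    using \<open>?n \<noteq> 0\<close> by (subst mult.commute) (auto intro: mult_divide_eq_ennreal)
  finally show ?thesis .
qed

lemma exists_dyadic_level:
  assumes "\<theta> \<ge> 1"
  shows "\<exists>m. \<theta> < 2 ^ m \<and> real m + 1 \<le> 2 * (1 + ln (real \<theta>))"
proof (intro exI conjI)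
  show "\<theta> < 2 ^ Suc (floor_log \<theta>)"
    using floor_log_exp2_gt[of \<theta>] by simp
  have "real (floor_log \<theta>) * (2 / 3) \<le> real (floor_log \<theta>) * ln 2"
    using ln2_ge_two_thirds by (intro mult_left_mono) auto
  also have "\<dots> = ln (real (2 ^ floor_log \<theta>))"
    by (simp add: ln_realpow)
  also have "\<dots> \<le> ln (real \<theta>)"
    using assms floor_log_exp2_le[of \<theta>] by simp
  finally have "real (floor_log \<theta>) * (2 / 3) \<le> ln (real \<theta>)" .
  moreover have "0 \<le> ln (real \<theta>)"
    using assms by simp
  ultimately show "real (Suc (floor_log \<theta>)) + 1 \<le> 2 * (1 + ln (real \<theta>))"
    by simp
qed

theorem theorem5p5:
  shows "\<exists>C>0. \<forall>(k::nat) (\<theta>::nat) (\<epsilon>::real). k \<ge> 1 \<longrightarrow> \<theta> \<ge> 1 \<longrightarrow> \<epsilon> > 0 \<longrightarrow>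
           (\<exists>M. blowfish_private \<epsilon> \<theta> k M \<and>
                error_per_query k M \<le> ennreal (C * (1 + ln (real \<theta>)) ^ 3 / \<epsilon>\<^sup>2))"
proof (intro exI[of _ 8192] conjI allI impI)
  fix k \<theta> :: nat and \<epsilon> :: real
  assume k: "k \<ge> 1" and \<theta>: "\<theta> \<ge> 1" and \<epsilon>: "\<epsilon> > 0"
  obtain m where m: "\<theta> < 2 ^ m" "real m + 1 \<le> 2 * (1 + ln (real \<theta>))"
    using exists_dyadic_level[OF \<theta>] by blast
  define s where "s = \<epsilon> / (2 * (real m + 1))"
  have s: "s > 0" "s * (2 * (real m + 1)) = \<epsilon>"
    using \<epsilon> by (simp_all add: s_def)
  have "(real m + 1) * (256 / s\<^sup>2) = 1024 * (real m + 1) ^ 3 / \<epsilon>\<^sup>2"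
    unfolding s_def using \<epsilon> by (simp add: field_simps power2_eq_square power3_eq_cube)
  also have "\<dots> \<le> 1024 * (2 * (1 + ln (real \<theta>))) ^ 3 / \<epsilon>\<^sup>2"
    using m(2) \<epsilon> by (intro divide_right_mono mult_left_mono power_mono) auto
  also have "\<dots> = 8192 * (1 + ln (real \<theta>)) ^ 3 / \<epsilon>\<^sup>2"
    by (simp only: power_mult_distrib) simp
  finally have error: "(real m + 1) * (256 / s\<^sup>2) \<le> 8192 * (1 + ln (real \<theta>)) ^ 3 / \<epsilon>\<^sup>2" .
  show "\<exists>M. blowfish_private \<epsilon> \<theta> k M \<and> error_per_query k M \<le> ennreal (8192 * (1 + ln (real \<theta>)) ^ 3 / \<epsilon>\<^sup>2)"
    using range_mechanism_query_error_le[OF s(1)] ennreal_leI[OF error]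
    by (intro exI[of _ "range_mechanism m k s"] conjI error_per_query_le[OF k]
        range_mechanism_blowfish_private[OF s(1) m(1) s(2)[THEN eq_refl]]) (rule order.trans)
qed simp

end
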